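(* For all $m\geq 2$: $s_{1,m}(211,213)=1$, $s_{2,m}(211,213)=m+1$, and for all $n\geq 3$, \[ s_{n,m}(211,213)=2\,s_{n-1,m}(211,213)+s_{n-2,m}(211,213). \]
   Context: $[n]_m=\{1^m,\ldots,n^m\}$; a permutation of $[n]_m$ is a sequence of length $nm$ in which each element of $[n]$ appears exactly $m$ times. A sequence avoids a pattern $\pi$ if it has no subsequence order-isomorphic to $\pi$ (same relative order and same equalities among entries). $s_{n,m}(\Pi)$ is the number of permutations of $[n]_m$ avoiding all patterns in $\Pi$. *)

theory Defs
  imports Main "HOL-Library.Sublist"
begin

definition order_iso :: "nat list \<Rightarrow> nat list \<Rightarrow> bool" where
  "order_iso u v \<longleftrightarrow> length u = length v \<and>
     (\<forall>i<length u. \<forall>j<length u. (u ! i < u ! j \<longleftrightarrow> v ! i < v ! j))"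

definition contains_pattern :: "nat list \<Rightarrow> nat list \<Rightarrow> bool" where
  "contains_pattern w p \<longleftrightarrow> (\<exists>u. subseq u w \<and> order_iso u p)"

definition avoids :: "nat list \<Rightarrow> nat list \<Rightarrow> bool" where
  "avoids w p \<longleftrightarrow> \<not> contains_pattern w p"

definition multiperm :: "nat \<Rightarrow> nat \<Rightarrow> nat list \<Rightarrow> bool" where
  "multiperm n m w \<longleftrightarrow> length w = n * m \<and> set w \<subseteq> {1..n} \<and>
     (\<forall>i\<in>{1..n}. count_list w i = m)"

definition s_count :: "nat \<Rightarrow> nat \<Rightarrow> nat list set \<Rightarrow> nat" where
  "s_count n m Pi = card {w. multiperm n m w \<and> (\<forall>p\<in>Pi. avoids w p)}"

end

theory Submission
  imports Defs
begin

(* A word avoiding 211 has at most one 1 after its first letter larger than 1, so an avoiding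
   permutation of [n+1]_m has the shape 1^(m-1) (y+1) 1 (z+1); avoiding 213 through the lone
   1 means every letter of y is at least every letter of z, and yz is an avoiding permutation
   of [n]_m. Conversely each such word avoids both patterns. Hence s(n+1) counts pairs of an
   avoider u of [n]_m and a cut of u into a prefix dominating the suffix. For n >= 2 the word u
   starts with 1, so besides the two trivial cuts only the cut before a final 1 qualifies, and
   the avoiders of [n]_m ending in 1 are exactly those with z empty, i.e. correspond to the
   avoiders of [n-1]_m. *)

lemma subseq_set: "subseq xs ys \<Longrightarrow> set xs \<subseteq> set ys"
  by (induction rule: list_emb.induct) auto

lemma subseq_skip_prefix: "x \<notin> set P \<Longrightarrow> subseq (x # xs) (P @ Q) \<Longrightarrow> subseq (x # xs) Q"
  by (induction P) auto

lemma count_list_replicate: "count_list (replicate n x) y = (if x = y then n else 0)"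
  by (induction n) auto

lemma ex_map_Suc: "0 \<notin> set xs \<Longrightarrow> \<exists>ys. xs = map Suc ys"
  by (induction xs) (auto simp: Cons_eq_map_conv not0_implies_Suc)

definition has_211_or_213 :: "nat list \<Rightarrow> bool" where
  "has_211_or_213 w \<longleftrightarrow> (\<exists>a b c. subseq [a, b, c] w \<and> b < a \<and> (c = b \<or> a < c))"

lemma order_iso_211: "order_iso [a, b, c] [2, 1, 1] \<longleftrightarrow> b < a \<and> c = b"
  unfolding order_iso_def by (simp add: numeral_3_eq_3 All_less_Suc) linarith

lemma order_iso_213: "order_iso [a, b, c] [2, 1, 3] \<longleftrightarrow> b < a \<and> a < c"
  unfolding order_iso_def by (simp add: numeral_3_eq_3 All_less_Suc) linarith

lemma contains_pattern_length_3:
  assumes "length p = 3"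
  shows "contains_pattern w p \<longleftrightarrow> (\<exists>a b c. subseq [a, b, c] w \<and> order_iso [a, b, c] p)"
proof -
  have "order_iso u p \<Longrightarrow> \<exists>a b c. u = [a, b, c]" for u
    using assms unfolding order_iso_def by (auto simp: numeral_3_eq_3 length_Suc_conv)
  then show ?thesis unfolding contains_pattern_def by blast
qed

lemma contains_211_iff: "contains_pattern w [2, 1, 1] \<longleftrightarrow> (\<exists>a b. subseq [a, b, b] w \<and> b < a)"
proof -
  have "contains_pattern w [2, 1, 1] \<longleftrightarrow>
      (\<exists>a b c. subseq [a, b, c] w \<and> order_iso [a, b, c] [2, 1, 1])"
    by (rule contains_pattern_length_3) simp
  then show ?thesis unfolding order_iso_211 by blast
qed

lemma contains_213_iff:
  "contains_pattern w [2, 1, 3] \<longleftrightarrow> (\<exists>a b c. subseq [a, b, c] w \<and> b < a \<and> a < c)"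
proof -
  have "contains_pattern w [2, 1, 3] \<longleftrightarrow>
      (\<exists>a b c. subseq [a, b, c] w \<and> order_iso [a, b, c] [2, 1, 3])"
    by (rule contains_pattern_length_3) simp
  then show ?thesis unfolding order_iso_213 by blast
qed

lemma avoids_211_213_iff:
  "(\<forall>p\<in>{[2, 1, 1], [2, 1, 3]}. avoids w p) \<longleftrightarrow> \<not> has_211_or_213 w"
proof -
  have "(\<forall>p\<in>{[2, 1, 1], [2, 1, 3]}. avoids w p) \<longleftrightarrow>
      \<not> contains_pattern w [2, 1, 1] \<and> \<not> contains_pattern w [2, 1, 3]"
    unfolding avoids_def by simp
  then show ?thesis
    unfolding contains_211_iff contains_213_iff has_211_or_213_def by blast
qed

lemma has_211_or_213_subseq: "has_211_or_213 u \<Longrightarrow> subseq u w \<Longrightarrow> has_211_or_213 w"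
  unfolding has_211_or_213_def using subseq_order.order_trans by blast

lemma has_211_or_213_map_Suc: "has_211_or_213 (map Suc u) \<longleftrightarrow> has_211_or_213 u"
proof
  assume "has_211_or_213 u"
  then obtain a b c where "subseq [a, b, c] u" "b < a" "c = b \<or> a < c"
    unfolding has_211_or_213_def by blast
  then show "has_211_or_213 (map Suc u)"
    unfolding has_211_or_213_def using subseq_map[of "[a, b, c]" u Suc] by auto
next
  assume "has_211_or_213 (map Suc u)"
  then obtain a b c where abc: "subseq [a, b, c] (map Suc u)" "b < a" "c = b \<or> a < c"
    unfolding has_211_or_213_def by blast
  have "subseq (map (\<lambda>x. x - 1) [a, b, c]) u"
    using subseq_map[OF abc(1), of "\<lambda>x. x - 1"] by (simp add: comp_def)
  moreover have "0 < x" if "x \<in> set [a, b, c]" for x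
    using subseq_set[OF abc(1)] that by auto
  then have "0 < b" "0 < c" by simp_all
  with abc(2,3) have "b - 1 < a - 1" "c - 1 = b - 1 \<or> a - 1 < c - 1"
    by auto
  ultimately show "has_211_or_213 u"
    unfolding has_211_or_213_def by auto
qed

definition insert_ones :: "nat \<Rightarrow> nat list \<Rightarrow> nat list \<Rightarrow> nat list" where
  "insert_ones m y z = replicate (m - 1) 1 @ map Suc y @ 1 # map Suc z"

lemma set_insert_ones: "set (insert_ones m y z) = insert 1 (Suc ` set (y @ z))"
  by (auto simp: insert_ones_def)

lemma length_insert_ones: "0 < m \<Longrightarrow> length (insert_ones m y z) = m + length (y @ z)"
  by (simp add: insert_ones_def)

lemma count_list_insert_ones:
  "0 < m \<Longrightarrow> count_list (insert_ones m y z) (Suc i) = (if i = 0 then m else 0) + count_list (y @ z) i"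
  by (simp add: insert_ones_def count_list_replicate count_list_map_conv)

lemma insert_ones_eq_iff:
  assumes "0 \<notin> set (y @ z)"
  shows "insert_ones m y z = insert_ones m y' z' \<longleftrightarrow> y = y' \<and> z = z'"
proof -
  have "1 \<notin> set (map Suc y)" "1 \<notin> set (map Suc z)"
    using assms by auto
  then have "map Suc y @ 1 # map Suc z = map Suc y' @ 1 # map Suc z' \<longleftrightarrow>
      map Suc y = map Suc y' \<and> map Suc z = map Suc z'"
    by (rule append_Cons_eq_iff)
  then show ?thesis
    unfolding insert_ones_def by simp
qed

lemma last_insert_ones: "0 \<notin> set z \<Longrightarrow> last (insert_ones m y z) = 1 \<longleftrightarrow> z = []"
  by (cases z rule: rev_cases) (auto simp: insert_ones_def)

lemma multiperm_insert_ones: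
  assumes "0 < m"
  shows "multiperm (Suc n) m (insert_ones m y z) \<longleftrightarrow> multiperm n m (y @ z)"
proof -
  let ?u = "y @ z" and ?w = "insert_ones m y z"
  have count: "count_list ?w (Suc i) = (if i = 0 then m else 0) + count_list ?u i" for i
    using count_list_insert_ones[OF assms] .
  have "count_list ?w 1 = m \<longleftrightarrow> 0 \<notin> set ?u"
    using count[of 0] by (simp add: count_list_0_iff)
  moreover have "{1..Suc n} = insert 1 (Suc ` {1..n})"
    by (simp add: Icc_eq_insert_lb_nat)
  then have "(\<forall>i\<in>{1..Suc n}. count_list ?w i = m) \<longleftrightarrow>
      count_list ?w 1 = m \<and> (\<forall>i\<in>{1..n}. count_list ?w (Suc i) = m)"
    by (simp del: image_Suc_atLeastAtMost)
  ultimately have counts: "(\<forall>i\<in>{1..Suc n}. count_list ?w i = m) \<longleftrightarrow>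
      0 \<notin> set ?u \<and> (\<forall>i\<in>{1..n}. count_list ?u i = m)"
    using count by auto
  have "set ?w \<subseteq> {1..Suc n} \<longleftrightarrow> set ?u \<subseteq> {0..n}"
    by (auto simp: set_insert_ones)
  moreover have "length ?w = Suc n * m \<longleftrightarrow> length ?u = n * m"
    using assms by (simp add: length_insert_ones)
  moreover have "set ?u \<subseteq> {0..n} \<and> 0 \<notin> set ?u \<longleftrightarrow> set ?u \<subseteq> {1..n}"
    by (auto simp: subset_iff Suc_le_eq) (metis gr0I)+
  ultimately show ?thesis
    unfolding multiperm_def counts by blast
qed

lemma subseq_map_Suc_insert_ones: "subseq (map Suc (y @ z)) (insert_ones m y z)"
  unfolding insert_ones_def map_append
  by (intro subseq_drop_many list_emb_append_mono subseq_order.order_refl list_emb_Cons)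

lemma filter_ne_1_insert_ones:
  assumes "0 \<notin> set (y @ z)"
  shows "filter (\<lambda>x. x \<noteq> 1) (insert_ones m y z) = map Suc (y @ z)"
proof -
  have "filter (\<lambda>x. x \<noteq> 0) xs = xs" if "0 \<notin> set xs" for xs :: "nat list"
    using that by (induction xs) auto
  with assms show ?thesis
    by (simp add: insert_ones_def filter_replicate filter_map comp_def del: neq0_conv)
qed

lemma subseq_insert_ones_through_one:
  assumes "0 \<notin> set (y @ z)" "subseq [a, 1, c] (insert_ones m y z)" "a \<noteq> 1"
  shows "\<exists>a'\<in>set y. \<exists>c'\<in>set z. a = Suc a' \<and> c = Suc c'"
proof -
  have no_one: "1 \<notin> set (map Suc y)" "1 \<notin> set (map Suc z)"
    using assms(1) by auto
  have "a \<notin> set (replicate (m - 1) 1)"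
    using assms(3) by simp
  then have "subseq [a, 1, c] (map Suc y @ 1 # map Suc z)"
    using assms(2) unfolding insert_ones_def by (rule subseq_skip_prefix)
  then obtain xs1 xs2 where split: "[a, 1, c] = xs1 @ xs2"
    and xs1: "subseq xs1 (map Suc y)" and xs2: "subseq xs2 (1 # map Suc z)"
    by (rule subseq_appendE)
  have "1 \<notin> set xs1"
    using subseq_set[OF xs1] no_one(1) by blast
  with split have "xs1 = [] \<or> xs1 = [a] \<and> xs2 = [1, c]"
    by (cases xs1) (auto simp: Cons_eq_append_conv)
  moreover have "xs1 \<noteq> []"
  proof
    assume "xs1 = []"
    with split have "xs2 = [a, 1, c]" by simp
    with xs2 assms(3) have "subseq [a, 1, c] (map Suc z)" by simp
    with no_one(2) show False by (auto dest: subseq_set)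
  qed
  ultimately have "a \<in> set (map Suc y)" "c \<in> set (map Suc z)"
    using xs1 xs2 by (auto simp: subseq_singleton_left)
  then show ?thesis by auto
qed

lemma has_211_or_213_insert_ones:
  assumes "0 \<notin> set (y @ z)"
  shows "has_211_or_213 (insert_ones m y z) \<longleftrightarrow>
    has_211_or_213 (y @ z) \<or> (\<exists>b\<in>set y. \<exists>c\<in>set z. b < c)"
proof
  assume "has_211_or_213 (insert_ones m y z)"
  then obtain a b c where abc: "subseq [a, b, c] (insert_ones m y z)" "b < a" "c = b \<or> a < c"
    unfolding has_211_or_213_def by blast
  have "0 < b"
    using subseq_set[OF abc(1)] assms by (auto simp: set_insert_ones)
  show "has_211_or_213 (y @ z) \<or> (\<exists>b\<in>set y. \<exists>c\<in>set z. b < c)"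
  proof (cases "b = 1")
    case True
    with abc obtain a' c' where "a' \<in> set y" "c' \<in> set z" "a = Suc a'" "c = Suc c'"
      using subseq_insert_ones_through_one[OF assms] by blast
    moreover have "c' \<noteq> 0"
      using assms \<open>c' \<in> set z\<close> by (cases c') auto
    ultimately show ?thesis
      using abc(3) True by auto
  next
    case False
    have "filter (\<lambda>x. x \<noteq> 1) [a, b, c] = [a, b, c]"
      using False \<open>0 < b\<close> abc(2,3) by auto
    then have "subseq [a, b, c] (map Suc (y @ z))"
      using subseq_filter[OF abc(1), of "\<lambda>x. x \<noteq> 1"] filter_ne_1_insert_ones[OF assms] by simp
    with abc(2,3) have "has_211_or_213 (map Suc (y @ z))"
      unfolding has_211_or_213_def by blast
    then show ?thesis
      unfolding has_211_or_213_map_Suc ..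
  qed
next
  assume "has_211_or_213 (y @ z) \<or> (\<exists>b\<in>set y. \<exists>c\<in>set z. b < c)"
  then show "has_211_or_213 (insert_ones m y z)"
  proof
    assume "has_211_or_213 (y @ z)"
    then have "has_211_or_213 (map Suc (y @ z))"
      unfolding has_211_or_213_map_Suc .
    then show ?thesis
      using subseq_map_Suc_insert_ones by (rule has_211_or_213_subseq)
  next
    assume "\<exists>b\<in>set y. \<exists>c\<in>set z. b < c"
    then obtain b c where "b \<in> set y" "c \<in> set z" "b < c" by blast
    then have "subseq ([Suc b] @ [1, Suc c]) (map Suc y @ 1 # map Suc z)"
      by (intro list_emb_append_mono) (simp_all add: subseq_singleton_left)
    then have "subseq [Suc b, 1, Suc c] (insert_ones m y z)"
      unfolding insert_ones_def by (simp add: subseq_drop_many)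
    moreover have "0 < b"
      using assms \<open>b \<in> set y\<close> by (cases b) auto
    ultimately show ?thesis
      using \<open>b < c\<close> unfolding has_211_or_213_def
      by (intro exI[of _ "Suc b"] exI[of _ 1] exI[of _ "Suc c"]) simp
  qed
qed

lemma replicate_prefix_of_avoider:
  assumes "\<not> has_211_or_213 w" "0 \<notin> set w" "count_list w 1 = Suc k"
  shows "\<exists>v. w = replicate k 1 @ v \<and> count_list v 1 = 1"
  using assms
proof (induction w arbitrary: k)
  case Nil
  then show ?case by simp
next
  case (Cons x w)
  have avoid: "\<not> has_211_or_213 w"
    using Cons.prems(1) has_211_or_213_subseq[of w "x # w"] by auto
  show ?case
  proof (cases k)
    case 0
    with Cons.prems(3) show ?thesis by auto
  next
    case (Suc k')
    show ?thesis
    proof (cases "x = 1")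
      case True
      with Cons.prems Suc obtain v where "w = replicate k' 1 @ v" "count_list v 1 = 1"
        using Cons.IH[OF avoid] by auto
      with True Suc show ?thesis by auto
    next
      case False
      with Cons.prems(2) have "1 < x" by auto
      from False Cons.prems(3) Suc obtain p r where w: "w = p @ 1 # r" and "count_list r 1 = Suc k'"
        using count_list_Suc_split_first[of w 1] by auto
      then have "subseq [1, 1] (1 # r)"
        by (metis count_list_0_iff nat.distinct(1) subseq_Cons2 subseq_singleton_left)
      then have "subseq [x, 1, 1] (x # w)"
        unfolding w by (simp add: subseq_drop_many)
      with \<open>1 < x\<close> Cons.prems(1) show ?thesis
        unfolding has_211_or_213_def by blast
    qed
  qed
qed

lemma avoider_eq_insert_ones:
  assumes "0 < m" "multiperm (Suc n) m w" "\<not> has_211_or_213 w"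
  shows "\<exists>y z. w = insert_ones m y z"
proof -
  have "0 \<notin> set w" "count_list w 1 = Suc (m - 1)"
    using assms(1,2) unfolding multiperm_def by auto
  with assms(3) obtain v where w: "w = replicate (m - 1) 1 @ v" and "count_list v 1 = 1"
    using replicate_prefix_of_avoider by blast
  then obtain p r where v: "v = p @ 1 # r" "1 \<notin> set p" "1 \<notin> set r"
    using count_list_Suc_split_first[of v 1 0] by (auto simp: count_list_0_iff)
  have "0 \<notin> set p" "0 \<notin> set r"
    using \<open>0 \<notin> set w\<close> unfolding w v by auto
  then obtain y z where "p = map Suc y" "r = map Suc z"
    using ex_map_Suc by metis
  then have "w = insert_ones m y z"
    unfolding w v insert_ones_def by simp
  then show ?thesis by blast
qed

definition avoiders :: "nat \<Rightarrow> nat \<Rightarrow> nat list set" where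
  "avoiders n m = {w. multiperm n m w \<and> \<not> has_211_or_213 w}"

lemma s_count_eq_card_avoiders: "s_count n m {[2, 1, 1], [2, 1, 3]} = card (avoiders n m)"
  unfolding s_count_def avoiders_def avoids_211_213_iff ..

lemma finite_avoiders: "finite (avoiders n m)"
proof (rule finite_subset)
  show "avoiders n m \<subseteq> {w. set w \<subseteq> {1..n} \<and> length w = n * m}"
    unfolding avoiders_def multiperm_def by auto
qed (simp add: finite_lists_length_eq)

lemma zero_notin_avoider: "w \<in> avoiders n m \<Longrightarrow> 0 \<notin> set w"
  unfolding avoiders_def multiperm_def by auto

lemma avoiders_Suc_iff:
  assumes "0 < m"
  shows "w \<in> avoiders (Suc n) m \<longleftrightarrow>
    (\<exists>y z. w = insert_ones m y z \<and> y @ z \<in> avoiders n m \<and> (\<forall>b\<in>set y. \<forall>c\<in>set z. c \<le> b))"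
    (is "_ \<longleftrightarrow> ?rhs")
proof
  assume w: "w \<in> avoiders (Suc n) m"
  then obtain y z where "w = insert_ones m y z"
    using avoider_eq_insert_ones[OF assms] unfolding avoiders_def by blast
  moreover from w this have "multiperm n m (y @ z)"
    using multiperm_insert_ones[OF assms] unfolding avoiders_def by blast
  moreover from this have "0 \<notin> set (y @ z)"
    unfolding multiperm_def by auto
  ultimately show ?rhs
    using w has_211_or_213_insert_ones unfolding avoiders_def by (auto simp: not_less[symmetric])
next
  assume ?rhs
  then obtain y z where "w = insert_ones m y z" "y @ z \<in> avoiders n m"
    "\<forall>b\<in>set y. \<forall>c\<in>set z. c \<le> b"
    by blast
  moreover from this have "0 \<notin> set (y @ z)"
    using zero_notin_avoider by blast
  ultimately show "w \<in> avoiders (Suc n) m"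
    using multiperm_insert_ones[OF assms] has_211_or_213_insert_ones
    unfolding avoiders_def by (auto simp: not_less[symmetric])
qed

definition descending_splits :: "nat list \<Rightarrow> nat set" where
  "descending_splits u =
    {k. k \<le> length u \<and> (\<forall>b\<in>set (take k u). \<forall>c\<in>set (drop k u). c \<le> b)}"

lemma finite_descending_splits: "finite (descending_splits u)"
  by (rule finite_subset[of _ "{..length u}"]) (auto simp: descending_splits_def)

lemma descending_splits_replicate: "descending_splits (replicate k x) = {..k}"
  by (auto simp: descending_splits_def)

lemma avoiders_Suc_eq_image:
  assumes "0 < m"
  shows "avoiders (Suc n) m =
    (\<lambda>(u, k). insert_ones m (take k u) (drop k u)) ` (SIGMA u:avoiders n m. descending_splits u)"
    (is "_ = ?split ` ?S")
proof
  show "avoiders (Suc n) m \<subseteq> ?split ` ?S"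
  proof
    fix w assume "w \<in> avoiders (Suc n) m"
    then obtain y z where "w = insert_ones m y z" "y @ z \<in> avoiders n m"
      "\<forall>b\<in>set y. \<forall>c\<in>set z. c \<le> b"
      using avoiders_Suc_iff[OF assms] by blast
    then show "w \<in> ?split ` ?S"
      unfolding descending_splits_def by (intro image_eqI[of _ _ "(y @ z, length y)"]) auto
  qed
  show "?split ` ?S \<subseteq> avoiders (Suc n) m"
    using avoiders_Suc_iff[OF assms] unfolding descending_splits_def by fastforce
qed

lemma inj_on_split_insert_ones:
  "inj_on (\<lambda>(u, k). insert_ones m (take k u) (drop k u)) (SIGMA u:avoiders n m. descending_splits u)"
proof (rule inj_onI, clarify)
  fix u k u' k'
  assume "u \<in> avoiders n m" "k \<in> descending_splits u" "k' \<in> descending_splits u'"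
    and eq: "insert_ones m (take k u) (drop k u) = insert_ones m (take k' u') (drop k' u')"
  moreover from this have "0 \<notin> set (take k u @ drop k u)"
    using zero_notin_avoider by simp
  ultimately have "take k u = take k' u'" "drop k u = drop k' u'"
    using insert_ones_eq_iff by blast+
  moreover have "k \<le> length u" "k' \<le> length u'"
    using \<open>k \<in> _\<close> \<open>k' \<in> _\<close> unfolding descending_splits_def by auto
  ultimately show "u = u' \<and> k = k'"
    by (metis append_take_drop_id length_take min.absorb2)
qed

lemma card_avoiders_Suc:
  assumes "0 < m"
  shows "card (avoiders (Suc n) m) = (\<Sum>u\<in>avoiders n m. card (descending_splits u))"
  unfolding avoiders_Suc_eq_image[OF assms]
  by (simp add: card_image inj_on_split_insert_ones finite_avoiders finite_descending_splits)

lemma avoiders_0: "avoiders 0 m = {[]}"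
  unfolding avoiders_def multiperm_def has_211_or_213_def by auto

lemma avoiders_1:
  assumes "0 < m"
  shows "avoiders 1 m = {replicate m 1}"
proof -
  have "insert_ones m [] [] = replicate m 1"
    using assms by (simp add: insert_ones_def replicate_append_same flip: replicate_Suc)
  moreover have "(SIGMA u:{[]}. descending_splits u) = {([], 0)}"
    using descending_splits_replicate[of 0] by auto
  ultimately show ?thesis
    using avoiders_Suc_eq_image[OF assms, of 0] by (simp add: avoiders_0)
qed

lemma card_avoiders_1: "0 < m \<Longrightarrow> card (avoiders 1 m) = 1"
  by (simp add: avoiders_1 del: One_nat_def)

lemma card_avoiders_2:
  assumes "0 < m"
  shows "card (avoiders 2 m) = m + 1"
proof -
  have "card (avoiders (Suc 1) m) = card (descending_splits (replicate m 1))"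
    using card_avoiders_Suc[OF assms, of 1] unfolding avoiders_1[OF assms] by simp
  then show ?thesis
    by (simp add: descending_splits_replicate numeral_2_eq_2)
qed

lemma inner_descending_split_insert_ones:
  assumes "2 \<le> m" "0 \<notin> set (y @ z)" "y @ z \<noteq> []"
    and u: "u = insert_ones m y z"
    and k: "k \<in> descending_splits u" "0 < k" "k < length u"
  shows "z = [] \<and> k = length u - 1"
proof -
  have pos: "0 < x" if "x \<in> set u" for x
    using that assms(2) unfolding u set_insert_ones by auto
  obtain j where "m - 1 = Suc j"
    using assms(1) by (cases "m - 1") auto
  then have "1 \<in> set (take k u)"
    using \<open>0 < k\<close> unfolding u insert_ones_def by (cases k) auto
  then have ones: "c = 1" if "c \<in> set (drop k u)" for c
    using k(1) pos[OF in_set_dropD[OF that]] that unfolding descending_splits_def by fastforce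
  have "last u \<in> set (drop k u)"
    using \<open>k < length u\<close> last_in_set[of "drop k u"] by (simp add: last_drop)
  then have "z = []"
    using ones last_insert_ones assms(2) unfolding u by auto
  with assms(3) obtain y' b where "y = y' @ [b]"
    by (cases y rule: rev_cases) auto
  with \<open>z = []\<close> have u': "u = (replicate (m - 1) 1 @ map Suc y') @ [Suc b, 1]"
    unfolding u insert_ones_def by simp
  have "\<not> k \<le> length (replicate (m - 1) 1 @ map Suc y')"
  proof
    assume "k \<le> length (replicate (m - 1) (1::nat) @ map Suc y')"
    then have "Suc b = 1"
      by (intro ones) (simp add: u')
    moreover have "0 < b"
      using assms(2) \<open>y = y' @ [b]\<close> by (cases b) auto
    ultimately show False
      by simp
  qed
  with \<open>z = []\<close> \<open>k < length u\<close> show ?thesis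
    unfolding u' by simp
qed

lemma descending_splits_insert_ones:
  assumes "2 \<le> m" "0 \<notin> set (y @ z)" "y @ z \<noteq> []"
  defines "u \<equiv> insert_ones m y z"
  shows "descending_splits u = {0, length u} \<union> (if z = [] then {length u - 1} else {})"
proof -
  have "descending_splits u \<subseteq> {0, length u} \<union> (if z = [] then {length u - 1} else {})"
  proof
    fix k assume k: "k \<in> descending_splits u"
    then have "k \<le> length u"
      by (simp add: descending_splits_def)
    with inner_descending_split_insert_ones[OF assms(1-3) meta_eq_to_obj_eq[OF u_def] k]
    show "k \<in> {0, length u} \<union> (if z = [] then {length u - 1} else {})"
      by (cases "k = 0 \<or> k = length u") auto
  qed
  moreover have "length u - 1 \<in> descending_splits u" if "z = []"
  proof -
    have "u = (replicate (m - 1) 1 @ map Suc y) @ [1]"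
      using that unfolding u_def insert_ones_def by simp
    then have "drop (length u - 1) u = [1]"
      by simp
    moreover have "0 < x" if "x \<in> set u" for x
      using that assms(2) unfolding u_def set_insert_ones by auto
    ultimately show ?thesis
      unfolding descending_splits_def by (auto simp: Suc_le_eq dest: in_set_takeD)
  qed
  moreover have "{0, length u} \<subseteq> descending_splits u"
    by (simp add: descending_splits_def)
  ultimately show ?thesis
    by auto
qed

lemma card_descending_splits_avoider:
  assumes "2 \<le> m" "u \<in> avoiders (Suc (Suc n)) m"
  shows "card (descending_splits u) = 2 + of_bool (last u = 1)"
proof -
  obtain y z where u: "u = insert_ones m y z" and yz: "y @ z \<in> avoiders (Suc n) m"
    using assms avoiders_Suc_iff[where n = "Suc n"] by auto
  have "0 \<notin> set (y @ z)"
    using yz by (rule zero_notin_avoider)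
  moreover have "length (y @ z) = Suc n * m"
    using yz unfolding avoiders_def multiperm_def by simp
  then have "y @ z \<noteq> []" "2 < length u"
    using assms(1) by (auto simp: u length_insert_ones)
  ultimately have "descending_splits u = {0, length u} \<union> (if z = [] then {length u - 1} else {})"
    using assms(1) by (simp add: u descending_splits_insert_ones)
  moreover have "last u = 1 \<longleftrightarrow> z = []"
    unfolding u using \<open>0 \<notin> set (y @ z)\<close> by (intro last_insert_ones) simp
  ultimately show ?thesis
    using \<open>2 < length u\<close> by (auto simp: card_insert_if)
qed

lemma avoiders_ending_in_one:
  assumes "0 < m"
  shows "avoiders (Suc n) m \<inter> {u. last u = 1} = (\<lambda>v. insert_ones m v []) ` avoiders n m"
proof
  show "avoiders (Suc n) m \<inter> {u. last u = 1} \<subseteq> (\<lambda>v. insert_ones m v []) ` avoiders n m"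
  proof clarify
    fix u assume "u \<in> avoiders (Suc n) m" and last: "last u = 1"
    then obtain y z where "u = insert_ones m y z" "y @ z \<in> avoiders n m"
      using avoiders_Suc_iff[OF assms] by blast
    moreover from this have "z = []"
      using last zero_notin_avoider last_insert_ones by (metis Un_iff set_append)
    ultimately show "u \<in> (\<lambda>v. insert_ones m v []) ` avoiders n m"
      by simp
  qed
  show "(\<lambda>v. insert_ones m v []) ` avoiders n m \<subseteq> avoiders (Suc n) m \<inter> {u. last u = 1}"
  proof
    fix u assume "u \<in> (\<lambda>v. insert_ones m v []) ` avoiders n m"
    then obtain v where v: "v \<in> avoiders n m" "u = insert_ones m v []"
      by blast
    then have "u \<in> avoiders (Suc n) m"
      using avoiders_Suc_iff[OF assms] by fastforce
    moreover have "last u = 1"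
      using v(2) last_insert_ones[of "[]"] by simp
    ultimately show "u \<in> avoiders (Suc n) m \<inter> {u. last u = 1}"
      by simp
  qed
qed

lemma card_avoiders_ending_in_one:
  assumes "0 < m"
  shows "card (avoiders (Suc n) m \<inter> {u. last u = 1}) = card (avoiders n m)"
proof -
  have "inj_on (\<lambda>v. insert_ones m v []) (avoiders n m)"
    by (rule inj_onI) (simp add: insert_ones_eq_iff zero_notin_avoider)
  then show ?thesis
    unfolding avoiders_ending_in_one[OF assms] by (rule card_image)
qed

lemma card_avoiders_recurrence:
  assumes "2 \<le> m"
  shows "card (avoiders (Suc (Suc (Suc n))) m) =
    2 * card (avoiders (Suc (Suc n)) m) + card (avoiders (Suc n) m)"
proof -
  have "0 < m" using assms by simp
  let ?A = "avoiders (Suc (Suc n)) m"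
  have "card (avoiders (Suc (Suc (Suc n))) m) = (\<Sum>u\<in>?A. card (descending_splits u))"
    by (rule card_avoiders_Suc[OF \<open>0 < m\<close>])
  also have "\<dots> = (\<Sum>u\<in>?A. 2 + of_bool (last u = 1))"
    using card_descending_splits_avoider[OF assms] by simp
  also have "\<dots> = (\<Sum>u\<in>?A. 2) + (\<Sum>u\<in>?A. of_bool (last u = 1))"
    by (rule sum.distrib)
  also have "\<dots> = 2 * card ?A + card (?A \<inter> {u. last u = 1})"
    by (simp add: finite_avoiders)
  also have "\<dots> = 2 * card ?A + card (avoiders (Suc n) m)"
    by (simp only: card_avoiders_ending_in_one[OF \<open>0 < m\<close>])
  finally show ?thesis .
qed

theorem theorem5:
  fixes m :: nat
  assumes "m \<ge> 2"
  shows "s_count 1 m {[2,1,1],[2,1,3]} = 1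
    \<and> s_count 2 m {[2,1,1],[2,1,3]} = m + 1
    \<and> (\<forall>n\<ge>3. s_count n m {[2,1,1],[2,1,3]} =
           2 * s_count (n - 1) m {[2,1,1],[2,1,3]} + s_count (n - 2) m {[2,1,1],[2,1,3]})"
  unfolding s_count_eq_card_avoiders
proof (intro conjI allI impI)
  have "0 < m" using assms by simp
  then show "card (avoiders 1 m) = 1" "card (avoiders 2 m) = m + 1"
    by (rule card_avoiders_1, rule card_avoiders_2)
  fix n :: nat assume "n \<ge> 3"
  define k where "k = n - 3"
  with \<open>n \<ge> 3\<close> have "n = Suc (Suc (Suc k))"
    by simp
  then show "card (avoiders n m) = 2 * card (avoiders (n - 1) m) + card (avoiders (n - 2) m)"
    using card_avoiders_recurrence[OF assms] by simp
qed

end
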